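(* Let $k\ge 2$ be an integer and let $G$ be a graph of order $n$ with $\delta(G)\ge k$. Then $\mathrm{TC}_k(G)\le n-k+1$, with equality if and only if $G\cong K_k\vee G'$ for some graph $G'$ of order $n-k$.
   Context: All graphs are finite, simple and connected. $N(v)$ denotes the open neighborhood of $v$. For a graph $G$ with $\delta(G)\ge k$, a set $S\subseteq V(G)$ is a total $k$-dominating set if $|N(v)\cap S|\ge k$ for every $v\in V(G)$. Two disjoint sets $U,W\subseteq V(G)$ form a total $k$-coalition if neither is a total $k$-dominating set but $U\cup W$ is. A total $k$-coalition partition of $G$ is a partition $\Omega$ of $V(G)$ in which every set forms a total $k$-coalition with some other set of $\Omega$; $\mathrm{TC}_k(G)$ is the maximum cardinality of such a partition. $K_k\vee G'$ denotes the join of the complete graph $K_k$ and $G'$ (disjoint union plus all edges between them). *)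

theory Defs
  imports Main "HOL-Library.Disjoint_Sets"
begin

definition simple_graph :: "'a set \<Rightarrow> ('a \<Rightarrow> 'a \<Rightarrow> bool) \<Rightarrow> bool" where
  "simple_graph V E \<longleftrightarrow> finite V \<and> V \<noteq> {} \<and>
     (\<forall>x y. E x y \<longrightarrow> x \<in> V \<and> y \<in> V) \<and>
     (\<forall>x y. E x y \<longrightarrow> E y x) \<and> (\<forall>x. \<not> E x x)"

definition connected_graph :: "'a set \<Rightarrow> ('a \<Rightarrow> 'a \<Rightarrow> bool) \<Rightarrow> bool" where
  "connected_graph V E \<longleftrightarrow> (\<forall>u\<in>V. \<forall>v\<in>V. E\<^sup>*\<^sup>* u v)"

definition graph :: "'a set \<Rightarrow> ('a \<Rightarrow> 'a \<Rightarrow> bool) \<Rightarrow> bool" where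
  "graph V E \<longleftrightarrow> simple_graph V E \<and> connected_graph V E"

definition nbhd :: "'a set \<Rightarrow> ('a \<Rightarrow> 'a \<Rightarrow> bool) \<Rightarrow> 'a \<Rightarrow> 'a set" where
  "nbhd V E v = {u \<in> V. E v u}"

definition min_degree_ge :: "'a set \<Rightarrow> ('a \<Rightarrow> 'a \<Rightarrow> bool) \<Rightarrow> nat \<Rightarrow> bool" where
  "min_degree_ge V E k \<longleftrightarrow> (\<forall>v\<in>V. k \<le> card (nbhd V E v))"

definition total_k_dom :: "nat \<Rightarrow> 'a set \<Rightarrow> ('a \<Rightarrow> 'a \<Rightarrow> bool) \<Rightarrow> 'a set \<Rightarrow> bool" where
  "total_k_dom k V E S \<longleftrightarrow> S \<subseteq> V \<and> (\<forall>v\<in>V. k \<le> card (nbhd V E v \<inter> S))"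

definition total_k_coalition :: "nat \<Rightarrow> 'a set \<Rightarrow> ('a \<Rightarrow> 'a \<Rightarrow> bool) \<Rightarrow> 'a set \<Rightarrow> 'a set \<Rightarrow> bool" where
  "total_k_coalition k V E U W \<longleftrightarrow> U \<subseteq> V \<and> W \<subseteq> V \<and> U \<inter> W = {} \<and>
     \<not> total_k_dom k V E U \<and> \<not> total_k_dom k V E W \<and> total_k_dom k V E (U \<union> W)"

definition total_k_coalition_partition :: "nat \<Rightarrow> 'a set \<Rightarrow> ('a \<Rightarrow> 'a \<Rightarrow> bool) \<Rightarrow> 'a set set \<Rightarrow> bool" where
  "total_k_coalition_partition k V E \<Omega> \<longleftrightarrow> partition_on V \<Omega> \<and>
     (\<forall>U\<in>\<Omega>. \<exists>W\<in>\<Omega>. W \<noteq> U \<and> total_k_coalition k V E U W)"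

text \<open>TC_k(G): maximum cardinality of a total k-coalition partition (0 if none exists).\<close>
definition TC :: "nat \<Rightarrow> 'a set \<Rightarrow> ('a \<Rightarrow> 'a \<Rightarrow> bool) \<Rightarrow> nat" where
  "TC k V E = Sup {card \<Omega> | \<Omega>. total_k_coalition_partition k V E \<Omega>}"

definition graph_iso :: "'a set \<Rightarrow> ('a \<Rightarrow> 'a \<Rightarrow> bool) \<Rightarrow> 'b set \<Rightarrow> ('b \<Rightarrow> 'b \<Rightarrow> bool) \<Rightarrow> bool" where
  "graph_iso V1 E1 V2 E2 \<longleftrightarrow> (\<exists>f. bij_betw f V1 V2 \<and>
     (\<forall>x\<in>V1. \<forall>y\<in>V1. E1 x y \<longleftrightarrow> E2 (f x) (f y)))"

text \<open>Join K_k \<or> G': K_k on vertices Inl 0..k-1, G' on Inr ` V'.\<close>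
definition join_vertices :: "nat \<Rightarrow> 'a set \<Rightarrow> (nat + 'a) set" where
  "join_vertices k V' = Inl ` {..<k} \<union> Inr ` V'"

fun join_edges :: "nat \<Rightarrow> ('a \<Rightarrow> 'a \<Rightarrow> bool) \<Rightarrow> (nat + 'a) \<Rightarrow> (nat + 'a) \<Rightarrow> bool" where
  "join_edges k E' (Inl i) (Inl j) = (i < k \<and> j < k \<and> i \<noteq> j)"
| "join_edges k E' (Inl i) (Inr y) = (i < k)"
| "join_edges k E' (Inr x) (Inl j) = (j < k)"
| "join_edges k E' (Inr x) (Inr y) = E' x y"

end

theory Submission
  imports Defs
begin

text \<open>A total \<open>k\<close>-dominating set \<open>S\<close> has more than \<open>k\<close> elements, since each of its
  vertices has \<open>k\<close> neighbours in \<open>S\<close> besides itself. As the parts of a partition \<open>\<Omega>\<close> of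
  the \<open>n\<close> vertices have total excess \<open>\<Sum>A\<in>\<Omega>. |A| - 1 = n - |\<Omega>|\<close>, a single coalition
  pair already forces \<open>|\<Omega>| \<le> n - k + 1\<close>. At equality all excess sits in one pair and
  every other part is a singleton. Either \<open>n = k + 1\<close> and \<open>G\<close> is complete, or every
  singleton \<open>{y}\<close> has to be partnered with one and the same \<open>k\<close>-set \<open>B\<close>; a total
  \<open>k\<close>-dominating set \<open>B \<union> {y}\<close> of size \<open>k + 1\<close> is a clique, so the vertices of \<open>B\<close> are
  adjacent to all others. A set of \<open>k\<close> such universal vertices is precisely a join
  \<open>K\<^sub>k \<or> G'\<close>; conversely, such a set together with the singletons of the remaining
  vertices is a total \<open>k\<close>-coalition partition of size \<open>n - k + 1\<close>.\<close>

definition universal_clique :: "'a set \<Rightarrow> ('a \<Rightarrow> 'a \<Rightarrow> bool) \<Rightarrow> nat \<Rightarrow> 'a set \<Rightarrow> bool" where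
  "universal_clique V E k K \<longleftrightarrow> K \<subseteq> V \<and> card K = k \<and> (\<forall>v\<in>K. V - {v} \<subseteq> nbhd V E v)"

lemma simple_graph_finite: "simple_graph V E \<Longrightarrow> finite V"
  unfolding simple_graph_def by blast

lemma simple_graph_nonempty: "simple_graph V E \<Longrightarrow> V \<noteq> {}"
  unfolding simple_graph_def by blast

lemma simple_graph_sym: "simple_graph V E \<Longrightarrow> E x y \<Longrightarrow> E y x"
  unfolding simple_graph_def by blast

lemma simple_graph_irrefl: "simple_graph V E \<Longrightarrow> \<not> E x x"
  unfolding simple_graph_def by blast

lemma nbhd_subset: "simple_graph V E \<Longrightarrow> nbhd V E v \<subseteq> V - {v}"
  unfolding simple_graph_def nbhd_def by blast

lemma card_gt_if_min_degree_ge: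
  assumes "simple_graph V E" "min_degree_ge V E k"
  shows "k < card V"
proof -
  obtain v where v: "v \<in> V"
    using simple_graph_nonempty[OF assms(1)] by blast
  have "k \<le> card (nbhd V E v)"
    using assms(2) v by (simp add: min_degree_ge_def)
  also have "\<dots> \<le> card (V - {v})"
    by (rule card_mono) (use nbhd_subset[OF assms(1)] simple_graph_finite[OF assms(1)] in auto)
  also have "\<dots> < card V"
    using card_Diff1_less[OF simple_graph_finite[OF assms(1)] v] .
  finally show ?thesis .
qed

lemma total_k_dom_self_iff: "total_k_dom k V E V \<longleftrightarrow> min_degree_ge V E k"
proof -
  have "nbhd V E v \<inter> V = nbhd V E v" for v
    by (auto simp: nbhd_def)
  then show ?thesis
    by (simp add: total_k_dom_def min_degree_ge_def)
qed

lemma card_total_k_dom_gt: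
  assumes "simple_graph V E" "0 < k" "total_k_dom k V E S"
  shows "k < card S"
proof -
  have SV: "S \<subseteq> V" and dom: "\<And>v. v \<in> V \<Longrightarrow> k \<le> card (nbhd V E v \<inter> S)"
    using assms(3) unfolding total_k_dom_def by blast+
  have fin: "finite S"
    using finite_subset[OF SV simple_graph_finite[OF assms(1)]] .
  obtain v where "v \<in> V"
    using simple_graph_nonempty[OF assms(1)] by blast
  then have "nbhd V E v \<inter> S \<noteq> {}"
    using dom[of v] assms(2) by auto
  then obtain w where w: "w \<in> S" by blast
  have "k \<le> card (nbhd V E w \<inter> S)"
    using dom w SV by blast
  also have "\<dots> \<le> card (S - {w})"
    by (rule card_mono) (use fin nbhd_subset[OF assms(1)] in auto)
  also have "\<dots> < card S"
    using card_Diff1_less[OF fin w] .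
  finally show ?thesis .
qed

lemma total_k_dom_card_Suc_clique:
  assumes "simple_graph V E" "total_k_dom k V E D" "card D = Suc k" "v \<in> D"
  shows "D - {v} \<subseteq> nbhd V E v"
proof -
  have fin: "finite D"
    using assms(3) card.infinite by fastforce
  have "nbhd V E v \<inter> D \<subseteq> D - {v}"
    using nbhd_subset[OF assms(1)] by blast
  moreover have "card (D - {v}) \<le> card (nbhd V E v \<inter> D)"
    using assms(2-4) fin by (auto simp: total_k_dom_def)
  ultimately have "nbhd V E v \<inter> D = D - {v}"
    by (intro card_seteq) (use fin in auto)
  then show ?thesis by blast
qed

lemma total_k_coalition_card_gt:
  assumes "simple_graph V E" "0 < k" "total_k_coalition k V E U W"
  shows "k < card U + card W"
proof -
  have UW: "U \<subseteq> V" "W \<subseteq> V" "U \<inter> W = {}" and dom: "total_k_dom k V E (U \<union> W)"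
    using assms(3) by (auto simp: total_k_coalition_def)
  then have "finite U" "finite W"
    using simple_graph_finite[OF assms(1)] finite_subset by blast+
  then show ?thesis
    using card_total_k_dom_gt[OF assms(1,2) dom] card_Un_disjoint[of U W] UW(3) by simp
qed

lemma partition_on_elem:
  assumes "partition_on V \<Omega>" "finite V" "A \<in> \<Omega>"
  shows "A \<subseteq> V" "finite A" "0 < card A"
proof -
  show "A \<subseteq> V"
    using assms(1,3) partition_onD1 by blast
  then show "finite A"
    using assms(2) finite_subset by blast
  then show "0 < card A"
    using assms(1,3) partition_onD3 card_gt_0_iff by fastforce
qed

lemma partition_on_excess_bound:
  assumes "partition_on V \<Omega>" "finite V" "S \<subseteq> \<Omega>"
  shows "(\<Sum>A\<in>S. card A - 1) + card \<Omega> \<le> card V"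
proof -
  have fin: "finite \<Omega>"
    using finite_elements assms(1,2) by blast
  have "(\<Sum>A\<in>S. card A - 1) + card \<Omega> \<le> (\<Sum>A\<in>\<Omega>. card A - 1) + card \<Omega>"
    using sum_mono2[OF fin assms(3), of "\<lambda>A. card A - 1"] by simp
  also have "\<dots> = (\<Sum>A\<in>\<Omega>. card A - 1 + 1)"
    by (simp add: sum.distrib del: Suc_pred add_Suc_right)
  also have "\<dots> = (\<Sum>A\<in>\<Omega>. card A)"
    using partition_on_elem(3)[OF assms(1,2)] by (simp add: Suc_pred)
  also have "\<dots> = card V"
    using sum.partition[OF assms(2,1), of "\<lambda>_. 1 :: nat"] by simp
  finally show ?thesis .
qed

lemma coalition_partition_partnerE:
  assumes "total_k_coalition_partition k V E \<Omega>" "U \<in> \<Omega>"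
  obtains W where "W \<in> \<Omega>" "W \<noteq> U" "total_k_coalition k V E U W"
  using assms by (auto simp: total_k_coalition_partition_def)

lemma card_coalition_partition_le:
  assumes "simple_graph V E" "0 < k" "total_k_coalition_partition k V E \<Omega>"
  shows "card \<Omega> + k \<le> card V + 1"
proof -
  have P: "partition_on V \<Omega>" and fin: "finite V"
    using assms(1,3) simple_graph_finite by (auto simp: total_k_coalition_partition_def)
  obtain U where U: "U \<in> \<Omega>"
    using partition_onD1[OF P] simple_graph_nonempty[OF assms(1)] by blast
  then obtain W where W: "W \<in> \<Omega>" "W \<noteq> U" "total_k_coalition k V E U W"
    using coalition_partition_partnerE[OF assms(3)] by blast
  have "(card U - 1) + (card W - 1) + card \<Omega> \<le> card V"
    using partition_on_excess_bound[OF P fin, of "{U, W}"] U W(1,2) by simp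
  then show ?thesis
    using total_k_coalition_card_gt[OF assms(1,2) W(3)]
      partition_on_elem(3)[OF P fin U] partition_on_elem(3)[OF P fin W(1)] by linarith
qed

lemma tight_coalition_partition_singletonE:
  assumes sg: "simple_graph V E" and k: "2 \<le> k"
    and part: "total_k_coalition_partition k V E \<Omega>" and tight: "card \<Omega> + k = card V + 1"
    and x: "{x} \<in> \<Omega>"
  obtains B where "B \<subseteq> V" "card B = k" "\<forall>y\<in>V - B. total_k_dom k V E (insert y B)"
proof -
  have P: "partition_on V \<Omega>" and fin: "finite V"
    using part sg simple_graph_finite by (auto simp: total_k_coalition_partition_def)
  obtain B where B: "B \<in> \<Omega>" "B \<noteq> {x}" "total_k_coalition k V E {x} B"
    using coalition_partition_partnerE[OF part x] by blast
  have "k \<le> card B"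
    using total_k_coalition_card_gt[OF sg _ B(3)] k by simp
  moreover have "card B - 1 + card \<Omega> \<le> card V"
    using partition_on_excess_bound[OF P fin, of "{B, {x}}"] B(1,2) x by simp
  ultimately have cB: "card B = k"
    using tight by linarith
  have small: "card A \<le> 1" if "A \<in> \<Omega>" "A \<noteq> B" for A
    using partition_on_excess_bound[OF P fin, of "{B, A}"] that B(1) cB tight k by simp
  have "total_k_dom k V E (insert y B)" if y: "y \<in> V - B" for y
  proof -
    obtain A where A: "A \<in> \<Omega>" "y \<in> A"
      using y partition_onD1[OF P] by blast
    with y have "A \<noteq> B" by blast
    then have "\<forall>a\<in>A. \<forall>b\<in>A. a = b"
      using small[OF A(1)] card_le_Suc0_iff_eq[OF partition_on_elem(2)[OF P fin A(1)]] by simp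
    with A(2) have "A = {y}" by blast
    with A(1) obtain W where W: "W \<in> \<Omega>" "W \<noteq> {y}" "total_k_coalition k V E {y} W"
      using coalition_partition_partnerE[OF part] by blast
    have "k \<le> card W"
      using total_k_coalition_card_gt[OF sg _ W(3)] k by simp
    with k small[OF W(1)] have "W = B" by linarith
    with W(3) show ?thesis
      unfolding total_k_coalition_def by simp
  qed
  then show ?thesis
    using that partition_on_elem(1)[OF P fin B(1)] cB by blast
qed

lemma tight_coalition_partition_no_singleton:
  assumes sg: "simple_graph V E" and k: "0 < k"
    and part: "total_k_coalition_partition k V E \<Omega>" and tight: "card \<Omega> + k = card V + 1"
    and no_singleton: "\<forall>x. {x} \<notin> \<Omega>"
  shows "card V = Suc k"
proof -
  have P: "partition_on V \<Omega>" and fin: "finite V"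
    using part sg simple_graph_finite by (auto simp: total_k_coalition_partition_def)
  note card_pos = partition_on_elem(3)[OF P fin]
  obtain U where U: "U \<in> \<Omega>"
    using partition_onD1[OF P] simple_graph_nonempty[OF sg] by blast
  then obtain W where W: "W \<in> \<Omega>" "W \<noteq> U" "total_k_coalition k V E U W"
    using coalition_partition_partnerE[OF part] by blast
  have UW: "k < card U + card W"
    using total_k_coalition_card_gt[OF sg k W(3)] .
  have "A \<in> {U, W}" if A: "A \<in> \<Omega>" for A
  proof (rule ccontr)
    assume "A \<notin> {U, W}"
    then have "(card U - 1) + (card W - 1) + (card A - 1) + card \<Omega> \<le> card V"
      using partition_on_excess_bound[OF P fin, of "{U, W, A}"] U W(1,2) A by (simp add: eq_commute)
    then have "card A = 1"
      using UW card_pos[OF U] card_pos[OF W(1)] card_pos[OF A] tight by linarith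
    then obtain x where "A = {x}"
      by (rule card_1_singletonE)
    then show False
      using no_singleton A by blast
  qed
  then have "\<Omega> = {U, W}"
    using U W(1) by blast
  then show ?thesis
    using tight W(2) by simp
qed

lemma universal_clique_if_insert_dominating:
  assumes sg: "simple_graph V E" and B: "B \<subseteq> V" "card B = k" and k: "k < card V"
    and dom: "\<forall>y\<in>V - B. total_k_dom k V E (insert y B)"
  shows "universal_clique V E k B"
  unfolding universal_clique_def
proof (intro conjI ballI B subsetI)
  fix v u assume v: "v \<in> B" and u: "u \<in> V - {v}"
  have fin: "finite B"
    using finite_subset[OF B(1) simple_graph_finite[OF sg]] .
  obtain y where y: "y \<in> V - B" "u \<in> insert y B"
  proof (cases "u \<in> B")
    case True
    have "B \<noteq> V"
      using B(2) k by blast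
    then show ?thesis
      using that True B(1) by blast
  next
    case False
    then show ?thesis
      using that u by blast
  qed
  have "card (insert y B) = Suc k"
    using y(1) fin B(2) by simp
  then have "insert y B - {v} \<subseteq> nbhd V E v"
    using total_k_dom_card_Suc_clique[OF sg dom[rule_format, OF y(1)]] v by blast
  then show "u \<in> nbhd V E v"
    using y(2) u by blast
qed

lemma universal_clique_if_tight_coalition_partition:
  assumes sg: "simple_graph V E" and k: "2 \<le> k" and deg: "min_degree_ge V E k"
    and part: "total_k_coalition_partition k V E \<Omega>" and tight: "card \<Omega> + k = card V + 1"
  shows "\<exists>K. universal_clique V E k K"
proof (cases "\<exists>x. {x} \<in> \<Omega>")
  case True
  then obtain x where "{x} \<in> \<Omega>" by blast
  from tight_coalition_partition_singletonE[OF sg k part tight this] obtain B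
    where "B \<subseteq> V" "card B = k" "\<forall>y\<in>V - B. total_k_dom k V E (insert y B)" .
  with universal_clique_if_insert_dominating[OF sg _ _ card_gt_if_min_degree_ge[OF sg deg]]
  show ?thesis by blast
next
  case False
  then have cV: "card V = Suc k"
    using tight_coalition_partition_no_singleton[OF sg _ part tight] k by simp
  obtain w where w: "w \<in> V"
    using simple_graph_nonempty[OF sg] by blast
  have "V - (V - {w}) = {w}" "insert w (V - {w}) = V"
    using w by auto
  then have "\<forall>y\<in>V - (V - {w}). total_k_dom k V E (insert y (V - {w}))"
    using deg by (simp add: total_k_dom_self_iff)
  moreover have "card (V - {w}) = k"
    using cV w simple_graph_finite[OF sg] by simp
  moreover have "k < card V"
    using cV by simp
  ultimately have "universal_clique V E k (V - {w})"
    using universal_clique_if_insert_dominating[OF sg, of "V - {w}"] by blast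
  then show ?thesis ..
qed

lemma universal_cliqueD:
  assumes "simple_graph V E" "universal_clique V E k K"
  shows "K \<subseteq> V" "card K = k" "finite K"
proof -
  show "K \<subseteq> V" "card K = k"
    using assms(2) unfolding universal_clique_def by blast+
  then show "finite K"
    using finite_subset simple_graph_finite[OF assms(1)] by blast
qed

lemma universal_clique_adj:
  assumes "simple_graph V E" "universal_clique V E k K" "v \<in> K" "u \<in> V" "u \<noteq> v"
  shows "E v u" "E u v"
proof -
  show "E v u"
    using assms(2-5) unfolding universal_clique_def nbhd_def by blast
  then show "E u v"
    using simple_graph_sym[OF assms(1)] by blast
qed

lemma total_k_coalition_universal_clique_singleton:
  assumes sg: "simple_graph V E" and k: "0 < k" and K: "universal_clique V E k K"
    and x: "x \<in> V - K"
  shows "total_k_coalition k V E K {x}"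
proof -
  note KV = universal_cliqueD(1)[OF sg K] and cK = universal_cliqueD(2)[OF sg K]
    and fK = universal_cliqueD(3)[OF sg K]
  have fin: "finite (nbhd V E v \<inter> insert x K)" for v
    using fK by simp
  have "k \<le> card (nbhd V E v \<inter> insert x K)" if v: "v \<in> V" for v
  proof (cases "v \<in> K")
    case True
    have "insert x K - {v} \<subseteq> nbhd V E v \<inter> insert x K"
      using universal_clique_adj(1)[OF sg K True] KV x unfolding nbhd_def by auto
    moreover have "card (insert x K - {v}) = k"
      using True x fK cK by simp
    ultimately show ?thesis
      using card_mono[OF fin] by metis
  next
    case False
    have "K \<subseteq> nbhd V E v \<inter> insert x K"
      using universal_clique_adj(2)[OF sg K _ v] False KV unfolding nbhd_def by blast
    then show ?thesis
      using card_mono[OF fin] cK by metis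
  qed
  then have "total_k_dom k V E (K \<union> {x})"
    using KV x unfolding total_k_dom_def by simp
  moreover have "\<not> total_k_dom k V E K" "\<not> total_k_dom k V E {x}"
    using card_total_k_dom_gt[OF sg k] cK k by fastforce+
  ultimately show ?thesis
    using KV x unfolding total_k_coalition_def by blast
qed

lemma tight_coalition_partition_if_universal_clique:
  assumes sg: "simple_graph V E" and k: "2 \<le> k" and K: "universal_clique V E k K"
    and n: "k < card V"
  shows "\<exists>\<Omega>. total_k_coalition_partition k V E \<Omega> \<and> card \<Omega> + k = card V + 1"
proof -
  note KV = universal_cliqueD(1)[OF sg K] and cK = universal_cliqueD(2)[OF sg K]
    and fK = universal_cliqueD(3)[OF sg K]
  define \<Omega> where "\<Omega> = insert K ((\<lambda>x. {x}) ` (V - K))"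
  have K_not_singleton: "K \<notin> (\<lambda>x. {x}) ` (V - K)"
    using cK k by auto
  have "card \<Omega> = Suc (card (V - K))"
    unfolding \<Omega>_def using K_not_singleton simple_graph_finite[OF sg] by (simp add: card_image)
  also have "card (V - K) = card V - k"
    using KV fK cK by (simp add: card_Diff_subset)
  finally have card_\<Omega>: "card \<Omega> + k = card V + 1"
    using n by simp
  have "K \<noteq> {}"
    using cK k by auto
  then have P: "partition_on V \<Omega>"
    unfolding \<Omega>_def partition_on_def disjoint_def using KV by auto
  obtain x0 where x0: "x0 \<in> V - K"
    using card_mono[OF fK, of V] n cK by auto
  have "\<exists>W\<in>\<Omega>. W \<noteq> U \<and> total_k_coalition k V E U W" if "U \<in> \<Omega>" for U
  proof -
    from that consider "U = K" | x where "x \<in> V - K" "U = {x}"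
      unfolding \<Omega>_def by blast
    then show ?thesis
    proof cases
      case 1
      then show ?thesis
        using total_k_coalition_universal_clique_singleton[OF sg _ K x0] k x0 K_not_singleton
        unfolding \<Omega>_def by auto
    next
      case (2 x)
      then have "total_k_coalition k V E {x} K"
        using total_k_coalition_universal_clique_singleton[OF sg _ K 2(1)] k
        by (auto simp: total_k_coalition_def Un_commute)
      then show ?thesis
        using 2 K_not_singleton unfolding \<Omega>_def by auto
    qed
  qed
  with P have "total_k_coalition_partition k V E \<Omega>"
    unfolding total_k_coalition_partition_def by blast
  with card_\<Omega> show ?thesis by blast
qed

lemma simple_graph_restrict:
  assumes "simple_graph V E" "V' \<subseteq> V" "V' \<noteq> {}"
  shows "simple_graph V' (\<lambda>x y. E x y \<and> x \<in> V' \<and> y \<in> V')"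
  using assms finite_subset unfolding simple_graph_def by blast

lemma graph_iso_join_if_universal_clique:
  assumes sg: "simple_graph V E" and K: "universal_clique V E k K"
  shows "graph_iso V E (join_vertices k (V - K))
           (join_edges k (\<lambda>x y. E x y \<and> x \<in> V - K \<and> y \<in> V - K))"
proof -
  note KV = universal_cliqueD(1)[OF sg K] and cK = universal_cliqueD(2)[OF sg K]
    and fK = universal_cliqueD(3)[OF sg K]
  obtain g where g: "bij_betw g K {..<k}"
    using ex_bij_betw_finite_nat[OF fK] cK by (auto simp: atLeast0LessThan)
  define f where "f v = (if v \<in> K then Inl (g v) else Inr v)" for v
  have "bij_betw f K (Inl ` {..<k})"
    using bij_betw_trans[OF g bij_betw_imageI[of Inl]] unfolding f_def
    by (auto simp: bij_betw_def inj_on_def o_def image_image)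
  moreover have "bij_betw f (V - K) (Inr ` (V - K))"
    unfolding f_def bij_betw_def inj_on_def by auto
  ultimately have "bij_betw f (K \<union> (V - K)) (join_vertices k (V - K))"
    unfolding join_vertices_def by (rule bij_betw_combine) auto
  then have bij: "bij_betw f V (join_vertices k (V - K))"
    using KV by (simp add: Un_absorb1)
  have g_lt: "g v < k" if "v \<in> K" for v
    using g that by (auto simp: bij_betw_def)
  have g_inj: "g v = g w \<longleftrightarrow> v = w" if "v \<in> K" "w \<in> K" for v w
    using g that by (auto simp: bij_betw_def inj_on_def)
  have "E x y \<longleftrightarrow> join_edges k (\<lambda>x y. E x y \<and> x \<in> V - K \<and> y \<in> V - K) (f x) (f y)"
    if "x \<in> V" "y \<in> V" for x y
  proof (cases "x \<in> K"; cases "y \<in> K")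
    assume xy: "x \<in> K" "y \<in> K"
    have "E x y \<longleftrightarrow> x \<noteq> y"
      using simple_graph_irrefl[OF sg] universal_clique_adj(1)[OF sg K xy(1) that(2)] by blast
    then show ?thesis
      using xy g_lt g_inj unfolding f_def by simp
  next
    assume "x \<in> K" "y \<notin> K"
    then show ?thesis
      using g_lt universal_clique_adj(1)[OF sg K _ that(2)] unfolding f_def by auto
  next
    assume "x \<notin> K" "y \<in> K"
    then show ?thesis
      using g_lt universal_clique_adj(2)[OF sg K _ that(1)] unfolding f_def by auto
  next
    assume "x \<notin> K" "y \<notin> K"
    then show ?thesis
      using that unfolding f_def by simp
  qed
  with bij show ?thesis
    unfolding graph_iso_def by blast
qed

lemma universal_clique_if_graph_iso_join:
  fixes V' :: "'b set"
  assumes "graph_iso V E (join_vertices k V') (join_edges k E')"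
  shows "\<exists>K. universal_clique V E k K"
proof -
  obtain f where bij: "bij_betw f V (join_vertices k V')"
    and edge: "\<And>x y. x \<in> V \<Longrightarrow> y \<in> V \<Longrightarrow> E x y \<longleftrightarrow> join_edges k E' (f x) (f y)"
    using assms unfolding graph_iso_def by blast
  define K where "K = {v \<in> V. f v \<in> Inl ` {..<k}}"
  have "f ` K = f ` V \<inter> Inl ` {..<k}"
    unfolding K_def by blast
  also have "\<dots> = Inl ` {..<k}"
    using bij unfolding bij_betw_def join_vertices_def by blast
  finally have "bij_betw f K (Inl ` {..<k})"
    using bij_betw_subset[OF bij, of K] unfolding K_def by simp
  then have "card K = card (Inl ` {..<k} :: (nat + 'b) set)"
    by (rule bij_betw_same_card)
  also have "\<dots> = k"
    by (simp add: card_image)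
  finally have cK: "card K = k" .
  have "V - {v} \<subseteq> nbhd V E v" if v: "v \<in> K" for v
  proof
    fix u assume u: "u \<in> V - {v}"
    obtain i where i: "i < k" "f v = Inl i" and vV: "v \<in> V"
      using v unfolding K_def by blast
    have "f u \<noteq> f v"
      using bij_betw_imp_inj_on[OF bij] u vV inj_on_contraD by fastforce
    moreover have "f u \<in> join_vertices k V'"
      using bij_betwE[OF bij] u by blast
    ultimately have "join_edges k E' (f v) (f u)"
      using i unfolding join_vertices_def by (cases "f u") auto
    then show "u \<in> nbhd V E v"
      using edge u vV unfolding nbhd_def by blast
  qed
  with cK have "universal_clique V E k K"
    unfolding universal_clique_def K_def by blast
  then show ?thesis ..
qed

lemma universal_clique_iff_graph_iso_join:
  fixes V :: "'a set"
  assumes sg: "simple_graph V E" and n: "k < card V"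
  shows "(\<exists>K. universal_clique V E k K) \<longleftrightarrow>
    (\<exists>(V' :: 'a set) E'. simple_graph V' E' \<and> card V' = card V - k \<and>
       graph_iso V E (join_vertices k V') (join_edges k E'))"
proof
  assume "\<exists>K. universal_clique V E k K"
  then obtain K where K: "universal_clique V E k K" ..
  note KV = universal_cliqueD(1)[OF sg K] and cK = universal_cliqueD(2)[OF sg K]
    and fK = universal_cliqueD(3)[OF sg K]
  have "V - K \<noteq> {}"
    using card_mono[OF fK, of V] n cK by auto
  then have "simple_graph (V - K) (\<lambda>x y. E x y \<and> x \<in> V - K \<and> y \<in> V - K)"
    using simple_graph_restrict[OF sg] by blast
  moreover have "card (V - K) = card V - k"
    using KV fK cK by (simp add: card_Diff_subset)
  ultimately show "\<exists>(V' :: 'a set) E'. simple_graph V' E' \<and> card V' = card V - k \<and>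
       graph_iso V E (join_vertices k V') (join_edges k E')"
    using graph_iso_join_if_universal_clique[OF sg K] by blast
next
  assume "\<exists>(V' :: 'a set) E'. simple_graph V' E' \<and> card V' = card V - k \<and>
       graph_iso V E (join_vertices k V') (join_edges k E')"
  then show "\<exists>K. universal_clique V E k K"
    using universal_clique_if_graph_iso_join by blast
qed

lemma Sup_nat_bounded:
  fixes S :: "nat set"
  assumes "\<forall>m\<in>S. m \<le> b"
  shows "Sup S \<le> b" and "0 < b \<Longrightarrow> Sup S = b \<longleftrightarrow> b \<in> S"
proof -
  have fin: "finite S"
    using assms finite_subset[of S "{..b}"] by auto
  show "Sup S \<le> b"
    using assms fin by (cases "S = {}") (simp_all add: cSup_eq_Max)
  show "Sup S = b \<longleftrightarrow> b \<in> S" if "0 < b"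
    using assms fin that by (cases "S = {}") (auto simp: cSup_eq_Max intro: Max_eqI Max_in)
qed

lemma TC_bounded:
  assumes "\<And>\<Omega>. total_k_coalition_partition k V E \<Omega> \<Longrightarrow> card \<Omega> \<le> b"
  shows "TC k V E \<le> b"
    and "0 < b \<Longrightarrow> TC k V E = b \<longleftrightarrow> (\<exists>\<Omega>. total_k_coalition_partition k V E \<Omega> \<and> card \<Omega> = b)"
proof -
  let ?S = "{card \<Omega> | \<Omega>. total_k_coalition_partition k V E \<Omega>}"
  have S: "\<forall>m\<in>?S. m \<le> b"
    using assms by blast
  show "TC k V E \<le> b"
    unfolding TC_def using Sup_nat_bounded(1)[OF S] .
  have "b \<in> ?S \<longleftrightarrow> (\<exists>\<Omega>. total_k_coalition_partition k V E \<Omega> \<and> card \<Omega> = b)"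
    by auto
  then show "TC k V E = b \<longleftrightarrow> (\<exists>\<Omega>. total_k_coalition_partition k V E \<Omega> \<and> card \<Omega> = b)"
    if "0 < b"
    unfolding TC_def using Sup_nat_bounded(2)[OF S that] by simp
qed

theorem proposition3p2:
  fixes V :: "'a set" and E :: "'a \<Rightarrow> 'a \<Rightarrow> bool" and k n :: nat
  assumes "graph V E" and "2 \<le> k" and "card V = n" and "min_degree_ge V E k"
  shows "TC k V E \<le> n - k + 1 \<and>
    (TC k V E = n - k + 1 \<longleftrightarrow>
      (\<exists>(V' :: 'a set) E'. simple_graph V' E' \<and> card V' = n - k \<and>
         graph_iso V E (join_vertices k V') (join_edges k E')))"
proof -
  have sg: "simple_graph V E"
    using assms(1) by (simp add: graph_def)
  have n: "k < n"
    using card_gt_if_min_degree_ge[OF sg assms(4)] assms(3) by simp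
  have bound: "card \<Omega> \<le> n - k + 1" if "total_k_coalition_partition k V E \<Omega>" for \<Omega>
    using card_coalition_partition_le[OF sg _ that] assms(2,3) by linarith
  have tight_iff: "card \<Omega> = n - k + 1 \<longleftrightarrow> card \<Omega> + k = card V + 1" for \<Omega> :: "'a set set"
    using n assms(3) by linarith
  have "(\<exists>\<Omega>. total_k_coalition_partition k V E \<Omega> \<and> card \<Omega> = n - k + 1) \<longleftrightarrow>
      (\<exists>K. universal_clique V E k K)"
    unfolding tight_iff
    using universal_clique_if_tight_coalition_partition[OF sg assms(2,4)]
      tight_coalition_partition_if_universal_clique[OF sg assms(2)] n assms(3) by blast
  then show ?thesis
    using TC_bounded[OF bound] universal_clique_iff_graph_iso_join[OF sg] n assms(3) by simp
qed

end
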